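(* Let $A_J=k\langle x_1,x_2\rangle/(x_2x_1-x_1x_2-x_1^2)$ and let $K$ be a Hopf algebra with bijective antipode $S$ such that $A_J$ is a right $K$-comodule algebra via $\rho(x_i)=x_1\otimes a_{1i}+x_2\otimes a_{2i}$, with homological codeterminant ${\sf D}$. Then $$S(a_{11})=(a_{22}+a_{21}){\sf D}^{-1},\quad S(a_{12})=(-a_{11}-a_{12}+a_{21}+a_{22}){\sf D}^{-1},$$ $$S(a_{21})=-a_{21}{\sf D}^{-1},\quad S(a_{22})=(a_{11}-a_{21}){\sf D}^{-1}.$$
   Context: The Ext-algebra $E$ of $A_J$ is a left $K$-comodule algebra via $\rho^!(x_i^* )=\sum_s a_{is}\otimes x_s^*$ on $E_1=(A_1)^*$; the homological codeterminant is the grouplike ${\sf D}\in K$ with $\rho^!(\mathfrak e)={\sf D}\otimes\mathfrak e$ for $\mathfrak e$ spanning $E_2$. *)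

theory Defs
  imports Main
begin

definition k_algebra :: "('k::field \<Rightarrow> 'K::ring_1 \<Rightarrow> 'K) \<Rightarrow> bool" where
  "k_algebra sc \<longleftrightarrow>
     (\<forall>a b x. sc a (sc b x) = sc (a * b) x) \<and> (\<forall>x. sc 1 x = x) \<and>
     (\<forall>a x y. sc a (x + y) = sc a x + sc a y) \<and>
     (\<forall>a b x. sc (a + b) x = sc a x + sc b x) \<and>
     (\<forall>a x y. sc a (x * y) = sc a x * y) \<and>
     (\<forall>a x y. sc a (x * y) = x * sc a y)"

definition k_linear :: "('k::field \<Rightarrow> 'K::ring_1 \<Rightarrow> 'K) \<Rightarrow> ('K \<Rightarrow> 'k) \<Rightarrow> bool" where
  "k_linear sc f \<longleftrightarrow> (\<forall>x y. f (x + y) = f x + f y) \<and> (\<forall>c x. f (sc c x) = c * f x)"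

text \<open>Elements of K \<otimes>_k K (resp. K \<otimes> K \<otimes> K) are represented by finite lists of
simple tensors; two lists represent the same tensor iff all products of
k-linear functionals agree on them (over a field, such functionals separate
the points of the tensor product).\<close>
definition tensor2_eq :: "('k::field \<Rightarrow> 'K::ring_1 \<Rightarrow> 'K) \<Rightarrow> ('K \<times> 'K) list \<Rightarrow> ('K \<times> 'K) list \<Rightarrow> bool" where
  "tensor2_eq sc L M \<longleftrightarrow> (\<forall>f g. k_linear sc f \<longrightarrow> k_linear sc g \<longrightarrow>
      (\<Sum>(a, b)\<leftarrow>L. f a * g b) = (\<Sum>(a, b)\<leftarrow>M. f a * g b))"

definition tensor3_eq :: "('k::field \<Rightarrow> 'K::ring_1 \<Rightarrow> 'K) \<Rightarrow> ('K \<times> 'K \<times> 'K) list \<Rightarrow> ('K \<times> 'K \<times> 'K) list \<Rightarrow> bool" where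
  "tensor3_eq sc L M \<longleftrightarrow> (\<forall>f g h. k_linear sc f \<longrightarrow> k_linear sc g \<longrightarrow> k_linear sc h \<longrightarrow>
      (\<Sum>(a, b, c)\<leftarrow>L. f a * g b * h c) = (\<Sum>(a, b, c)\<leftarrow>M. f a * g b * h c))"

text \<open>Hopf algebra (K, comultiplication Dl, counit eps, antipode S) over k.
Maps defined on K \<otimes> K are required to give the stated value on every
representative of the tensor.\<close>
definition hopf_algebra ::
  "('k::field \<Rightarrow> 'K::ring_1 \<Rightarrow> 'K) \<Rightarrow> ('K \<Rightarrow> ('K \<times> 'K) list) \<Rightarrow> ('K \<Rightarrow> 'k) \<Rightarrow> ('K \<Rightarrow> 'K) \<Rightarrow> bool" where
  "hopf_algebra sc Dl eps S \<longleftrightarrow>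
     k_algebra sc \<and>
     (\<forall>x y. tensor2_eq sc (Dl (x + y)) (Dl x @ Dl y)) \<and>
     (\<forall>c x. tensor2_eq sc (Dl (sc c x)) (map (\<lambda>(a, b). (sc c a, b)) (Dl x))) \<and>
     (\<forall>x y. tensor2_eq sc (Dl (x * y)) [(a * c, b * d). (a, b) \<leftarrow> Dl x, (c, d) \<leftarrow> Dl y]) \<and>
     tensor2_eq sc (Dl 1) [(1, 1)] \<and>
     (\<forall>x. tensor3_eq sc [(a1, a2, b). (a, b) \<leftarrow> Dl x, (a1, a2) \<leftarrow> Dl a]
                        [(a, b1, b2). (a, b) \<leftarrow> Dl x, (b1, b2) \<leftarrow> Dl b]) \<and>
     k_linear sc eps \<and> (\<forall>x y. eps (x * y) = eps x * eps y) \<and> eps 1 = 1 \<and>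
     (\<forall>x L. tensor2_eq sc L (Dl x) \<longrightarrow>
        (\<Sum>(a, b)\<leftarrow>L. sc (eps a) b) = x \<and> (\<Sum>(a, b)\<leftarrow>L. sc (eps b) a) = x) \<and>
     (\<forall>x y. S (x + y) = S x + S y) \<and> (\<forall>c x. S (sc c x) = sc c (S x)) \<and>
     (\<forall>x L. tensor2_eq sc L (Dl x) \<longrightarrow>
        (\<Sum>(a, b)\<leftarrow>L. S a * b) = sc (eps x) 1 \<and> (\<Sum>(a, b)\<leftarrow>L. a * S b) = sc (eps x) 1)"

definition grouplike ::
  "('k::field \<Rightarrow> 'K::ring_1 \<Rightarrow> 'K) \<Rightarrow> ('K \<Rightarrow> ('K \<times> 'K) list) \<Rightarrow> ('K \<Rightarrow> 'k) \<Rightarrow> 'K \<Rightarrow> bool" where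
  "grouplike sc Dl eps g \<longleftrightarrow> tensor2_eq sc (Dl g) [(g, g)] \<and> eps g = 1"

text \<open>Coefficients r i j of the defining relation of A_J:
 x2 x1 - x1 x2 - x1^2 = \<Sum> r i j x_i x_j (indices 1, 2).\<close>
definition rJ :: "nat \<Rightarrow> nat \<Rightarrow> 'k::field" where
  "rJ i j = (if i = 2 \<and> j = 1 then 1 else if i = 1 \<and> j = 2 then -1
             else if i = 1 \<and> j = 1 then -1 else 0)"

text \<open>A_J = k<x1,x2>/(r) is a right K-comodule algebra via
 rho(x_i) = x_1 \<otimes> a 1 i + x_2 \<otimes> a 2 i:
 coassociativity and counitality on the generators, and rho(r) = 0 in
 A_J \<otimes> K, i.e. rho(r) \<in> k r \<otimes> K inside (V \<otimes> V) \<otimes> K.\<close>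
definition AJ_right_comodule_algebra ::
  "('k::field \<Rightarrow> 'K::ring_1 \<Rightarrow> 'K) \<Rightarrow> ('K \<Rightarrow> ('K \<times> 'K) list) \<Rightarrow> ('K \<Rightarrow> 'k) \<Rightarrow> (nat \<Rightarrow> nat \<Rightarrow> 'K) \<Rightarrow> bool" where
  "AJ_right_comodule_algebra sc Dl eps a \<longleftrightarrow>
     (\<forall>i\<in>{1,2}. \<forall>j\<in>{1,2}. tensor2_eq sc (Dl (a i j)) [(a i 1, a 1 j), (a i 2, a 2 j)]) \<and>
     (\<forall>i\<in>{1,2}. \<forall>j\<in>{1,2}. eps (a i j) = (if i = j then 1 else 0)) \<and>
     (\<exists>c. \<forall>k\<in>{1,2}. \<forall>l\<in>{1,2}.
        (\<Sum>i\<in>{1,2}. \<Sum>j\<in>{1,2}. sc (rJ i j) (a k i * a l j)) = sc (rJ k l) c)"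

text \<open>Homological codeterminant: the grouplike D with rho^!(e) = D \<otimes> e on E_2,
 where E = A_J^! , E_1 = V^*, E_2 = (V^* \<otimes> V^*)/R^\<bottom> (spanned by the monomials
 x_i^* x_j^*), and rho^!(x_i^*) = \<Sum>_s a i s \<otimes> x_s^*.  In K \<otimes> E_2 =
 (K \<otimes> V^* \<otimes> V^*)/(K \<otimes> R^\<bottom>), rho^!(x_i^* x_j^*) - D \<otimes> x_i^* x_j^* vanishes iff
 its pairing with r vanishes.\<close>
definition hom_codet ::
  "('k::field \<Rightarrow> 'K::ring_1 \<Rightarrow> 'K) \<Rightarrow> ('K \<Rightarrow> ('K \<times> 'K) list) \<Rightarrow> ('K \<Rightarrow> 'k) \<Rightarrow> (nat \<Rightarrow> nat \<Rightarrow> 'K) \<Rightarrow> 'K \<Rightarrow> bool" where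
  "hom_codet sc Dl eps a D \<longleftrightarrow> grouplike sc Dl eps D \<and>
     (\<forall>i\<in>{1,2}. \<forall>j\<in>{1,2}.
        (\<Sum>s\<in>{1,2}. \<Sum>t\<in>{1,2}. sc (rJ s t) (a i s * a j t)) = sc (rJ i j) D)"

end

theory Submission
  imports Defs
begin

text \<open>Applied to the coproduct of a i j, the antipode axiom says that the matrix (S(a i j))
is a left inverse of the matrix a. The codeterminant relations, read as quadratic identities
between the a i j, show that the explicit matrix of the theorem (an adjugate-like matrix times
the right inverse of D) is a right inverse of a. In any ring a left and a right inverse of the
same matrix coincide.\<close>

lemma matrix2_left_inverse_eq_right_inverse:
  fixes s11 s12 s21 s22 a11 a12 a21 a22 b11 b12 b21 b22 :: "'a::ring_1"
  assumes l1: "s11*a11 + s12*a21 = 1" and l2: "s11*a12 + s12*a22 = 0"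
    and l3: "s21*a11 + s22*a21 = 0" and l4: "s21*a12 + s22*a22 = 1"
    and r1: "a11*b11 + a12*b21 = 1" and r2: "a11*b12 + a12*b22 = 0"
    and r3: "a21*b11 + a22*b21 = 0" and r4: "a21*b12 + a22*b22 = 1"
  shows "s11 = b11 \<and> s12 = b12 \<and> s21 = b21 \<and> s22 = b22"
proof -
  have assoc: "s*(a11*b + a12*b') + t*(a21*b + a22*b') = (s*a11 + t*a21)*b + (s*a12 + t*a22)*b'"
    for s t b b' :: 'a by (simp add: algebra_simps)
  have "s11 = s11*(a11*b11 + a12*b21) + s12*(a21*b11 + a22*b21)" using r1 r3 by simp
  also have "\<dots> = b11" unfolding assoc using l1 l2 by simp
  finally have "s11 = b11" .
  moreover have "s12 = s11*(a11*b12 + a12*b22) + s12*(a21*b12 + a22*b22)" using r2 r4 by simp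
  then have "s12 = b12" unfolding assoc using l1 l2 by simp
  moreover have "s21 = s21*(a11*b11 + a12*b21) + s22*(a21*b11 + a22*b21)" using r1 r3 by simp
  then have "s21 = b21" unfolding assoc using l3 l4 by simp
  moreover have "s22 = s21*(a11*b12 + a12*b22) + s22*(a21*b12 + a22*b22)" using r2 r4 by simp
  then have "s22 = b22" unfolding assoc using l3 l4 by simp
  ultimately show ?thesis by simp
qed

lemma k_algebra_scale_zero:
  assumes "k_algebra sc"
  shows "sc 0 x = 0"
proof -
  have "sc (0 + 0) x = sc 0 x + sc 0 x" using assms unfolding k_algebra_def by blast
  then show ?thesis by simp
qed

lemma k_algebra_scale_one:
  assumes "k_algebra sc"
  shows "sc 1 x = x"
  using assms unfolding k_algebra_def by blast

lemma k_algebra_scale_minus_one: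
  assumes "k_algebra sc"
  shows "sc (-1) x = - x"
proof -
  have "sc (1 + -1) x = sc 1 x + sc (-1) x" using assms unfolding k_algebra_def by blast
  then show ?thesis
    using assms by (simp add: k_algebra_scale_zero k_algebra_scale_one eq_neg_iff_add_eq_0 add.commute)
qed

lemma tensor2_eq_sym: "tensor2_eq sc L M \<Longrightarrow> tensor2_eq sc M L"
  unfolding tensor2_eq_def by metis

lemma antipode_comodule_coeff:
  assumes hopf: "hopf_algebra sc Dl eps S"
    and comod: "AJ_right_comodule_algebra sc Dl eps a"
    and "i \<in> {1,2}" "j \<in> {1,2}"
  shows "S (a i 1) * a 1 j + S (a i 2) * a 2 j = (if i = j then 1 else 0)"
proof -
  have coprod: "tensor2_eq sc (Dl (a i j)) [(a i 1, a 1 j), (a i 2, a 2 j)]"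
    and counit: "eps (a i j) = (if i = j then 1 else 0)"
    using comod \<open>i \<in> {1,2}\<close> \<open>j \<in> {1,2}\<close> unfolding AJ_right_comodule_algebra_def by blast+
  have "tensor2_eq sc L (Dl x) \<Longrightarrow> (\<Sum>(a, b)\<leftarrow>L. S a * b) = sc (eps x) 1" for L x
    using hopf unfolding hopf_algebra_def by blast
  from this[OF tensor2_eq_sym[OF coprod]]
  have "S (a i 1) * a 1 j + S (a i 2) * a 2 j = sc (eps (a i j)) 1" by simp
  moreover have "k_algebra sc" using hopf unfolding hopf_algebra_def by blast
  ultimately show ?thesis
    using counit by (simp add: k_algebra_scale_zero k_algebra_scale_one)
qed

lemma antipode_comodule_matrix_left_inverse:
  assumes "hopf_algebra sc Dl eps S" and "AJ_right_comodule_algebra sc Dl eps a"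
  shows "S (a 1 1) * a 1 1 + S (a 1 2) * a 2 1 = 1"
    and "S (a 1 1) * a 1 2 + S (a 1 2) * a 2 2 = 0"
    and "S (a 2 1) * a 1 1 + S (a 2 2) * a 2 1 = 0"
    and "S (a 2 1) * a 1 2 + S (a 2 2) * a 2 2 = 1"
  using antipode_comodule_coeff[OF assms, of 1 1] antipode_comodule_coeff[OF assms, of 1 2]
    antipode_comodule_coeff[OF assms, of 2 1] antipode_comodule_coeff[OF assms, of 2 2]
  by simp_all

lemma hom_codet_quadratic_relation:
  fixes sc :: "'k::field \<Rightarrow> 'K::ring_1 \<Rightarrow> 'K"
  assumes "k_algebra sc" and "hom_codet sc Dl eps a D"
    and "i \<in> {1,2}" "j \<in> {1,2}"
  shows "a i 2 * a j 1 - a i 1 * a j 2 - a i 1 * a j 1 = sc (rJ i j) D"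
proof -
  have "rJ 1 1 = (-1::'k)" "rJ 1 2 = (-1::'k)" "rJ 2 1 = (1::'k)" "rJ 2 2 = (0::'k)"
    by (simp_all add: rJ_def)
  then have "(\<Sum>s\<in>{1,2}. \<Sum>t\<in>{1,2}. sc (rJ s t) (a i s * a j t))
      = a i 2 * a j 1 - a i 1 * a j 2 - a i 1 * a j 1"
    using assms(1)
    by (simp add: k_algebra_scale_zero k_algebra_scale_one k_algebra_scale_minus_one
        del: One_nat_def)
  then show ?thesis
    using assms(2-4) unfolding hom_codet_def by auto
qed

lemma hom_codet_relations:
  assumes "k_algebra sc" and "hom_codet sc Dl eps a D"
  shows "a 1 2 * a 1 1 - a 1 1 * a 1 2 - a 1 1 * a 1 1 = - D"
    and "a 1 2 * a 2 1 - a 1 1 * a 2 2 - a 1 1 * a 2 1 = - D"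
    and "a 2 2 * a 1 1 - a 2 1 * a 1 2 - a 2 1 * a 1 1 = D"
    and "a 2 2 * a 2 1 - a 2 1 * a 2 2 - a 2 1 * a 2 1 = 0"
  using hom_codet_quadratic_relation[OF assms, of 1 1] hom_codet_quadratic_relation[OF assms, of 1 2]
    hom_codet_quadratic_relation[OF assms, of 2 1] hom_codet_quadratic_relation[OF assms, of 2 2]
    assms(1)
  by (simp_all add: rJ_def k_algebra_scale_zero k_algebra_scale_one k_algebra_scale_minus_one)

lemma codet_relations_right_inverse:
  fixes a11 a12 a21 a22 D Dinv :: "'a::ring_1"
  assumes e11: "a12 * a11 - a11 * a12 - a11 * a11 = - D"
    and e12: "a12 * a21 - a11 * a22 - a11 * a21 = - D"
    and e21: "a22 * a11 - a21 * a12 - a21 * a11 = D"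
    and e22: "a22 * a21 - a21 * a22 - a21 * a21 = 0"
    and "D * Dinv = 1"
  shows "a11 * ((a22 + a21) * Dinv) + a12 * (- (a21 * Dinv)) = 1"
    and "a11 * ((- a11 - a12 + a21 + a22) * Dinv) + a12 * ((a11 - a21) * Dinv) = 0"
    and "a21 * ((a22 + a21) * Dinv) + a22 * (- (a21 * Dinv)) = 0"
    and "a21 * ((- a11 - a12 + a21 + a22) * Dinv) + a22 * ((a11 - a21) * Dinv) = 1"
proof -
  have "a11 * ((a22 + a21) * Dinv) + a12 * (- (a21 * Dinv))
      = - (a12 * a21 - a11 * a22 - a11 * a21) * Dinv"
    by (simp add: algebra_simps)
  then show "a11 * ((a22 + a21) * Dinv) + a12 * (- (a21 * Dinv)) = 1"
    using e12 \<open>D * Dinv = 1\<close> by simp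
  have "a11 * ((- a11 - a12 + a21 + a22) * Dinv) + a12 * ((a11 - a21) * Dinv)
      = ((a12 * a11 - a11 * a12 - a11 * a11) - (a12 * a21 - a11 * a22 - a11 * a21)) * Dinv"
    by (simp add: algebra_simps)
  then show "a11 * ((- a11 - a12 + a21 + a22) * Dinv) + a12 * ((a11 - a21) * Dinv) = 0"
    using e11 e12 by simp
  have "a21 * ((a22 + a21) * Dinv) + a22 * (- (a21 * Dinv))
      = - (a22 * a21 - a21 * a22 - a21 * a21) * Dinv"
    by (simp add: algebra_simps)
  then show "a21 * ((a22 + a21) * Dinv) + a22 * (- (a21 * Dinv)) = 0"
    using e22 by simp
  have "a21 * ((- a11 - a12 + a21 + a22) * Dinv) + a22 * ((a11 - a21) * Dinv)
      = ((a22 * a11 - a21 * a12 - a21 * a11) - (a22 * a21 - a21 * a22 - a21 * a21)) * Dinv"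
    by (simp add: algebra_simps)
  then show "a21 * ((- a11 - a12 + a21 + a22) * Dinv) + a22 * ((a11 - a21) * Dinv) = 1"
    using e21 e22 \<open>D * Dinv = 1\<close> by simp
qed

theorem lemma5p7:
  fixes sc :: "'k::field \<Rightarrow> 'K::ring_1 \<Rightarrow> 'K"
    and Dl :: "'K \<Rightarrow> ('K \<times> 'K) list" and eps :: "'K \<Rightarrow> 'k" and S :: "'K \<Rightarrow> 'K"
    and a :: "nat \<Rightarrow> nat \<Rightarrow> 'K" and D Dinv :: 'K
  assumes "hopf_algebra sc Dl eps S"
    and "bij S"
    and "AJ_right_comodule_algebra sc Dl eps a"
    and "hom_codet sc Dl eps a D"
    and "D * Dinv = 1" and "Dinv * D = 1"
  shows "S (a 1 1) = (a 2 2 + a 2 1) * Dinv \<and>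
         S (a 1 2) = (- a 1 1 - a 1 2 + a 2 1 + a 2 2) * Dinv \<and>
         S (a 2 1) = - (a 2 1 * Dinv) \<and>
         S (a 2 2) = (a 1 1 - a 2 1) * Dinv"
proof -
  have "k_algebra sc" using assms(1) unfolding hopf_algebra_def by blast
  show ?thesis
    using matrix2_left_inverse_eq_right_inverse
      [OF antipode_comodule_matrix_left_inverse[OF assms(1,3)]
          codet_relations_right_inverse
            [OF hom_codet_relations[OF \<open>k_algebra sc\<close> assms(4)] assms(5)]]
    by simp
qed

end
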